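(* Let $d,n\ge 1$ and let $\mathfrak{m}(d)=\{m_{j_1,\dots,j_{d+1}}\}_{j_1,\dots,j_{d+1}=1}^n$ be a real multi-dimensional array, not identically zero. Let $X_1,\dots,X_d$ be random $n\times n$ real matrices (entries possibly dependent), and write $X^{(k)}_{ij}$ for the $(i,j)$ entry of $X_k$. Let $f\in\mathcal{B}_c$ and suppose $$P\big(|X^{(k)}_{ij}|\ge u\big)\le f(u)\quad\text{for all } u\ge 0 \text{ and all } i,j\in\{1,\dots,n\},\ k\in\{1,\dots,d\}.$$ Then for all $t\ge 0$, $$P\Big(\big|\operatorname{Tr}\big(\mathfrak{M}_{\mathfrak{m}(d)}(X_1,\dots,X_d)\big)\big|\ge t\Big)\le d n^2\, f\!\left(\frac{t^{1/d}}{\|\mathfrak{m}(d)\|_1^{1/d}}\right).$$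
   Context: $\mathcal{B}_c$ is the set of functions $f:[0,\infty)\to(0,\infty)$ that are continuous, strictly decreasing, satisfy $f(0)\ge 1$ and $\lim_{u\to\infty}f(u)=0$. For $n\times n$ real matrices $Y_1,\dots,Y_d$ with entries $y^{(k)}_{ij}$, the $d$-linear Schur multiplier is $\mathfrak{M}_{\mathfrak{m}(d)}(Y_1,\dots,Y_d)=\sum_{j_1,\dots,j_{d+1}=1}^n m_{j_1,\dots,j_{d+1}}\, y^{(1)}_{j_1,j_2}\cdots y^{(d)}_{j_d,j_{d+1}}\,E_{j_1,j_{d+1}}$, where $E_{i,j}$ is the elementary matrix with a $1$ in position $(i,j)$ and zeros elsewhere. $\|\mathfrak{m}(d)\|_1=\sum_{j_1,\dots,j_{d+1}}|m_{j_1,\dots,j_{d+1}}|$. *)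

theory Defs
  imports "HOL-Probability.Probability"
begin

definition B_c :: "(real \<Rightarrow> real) \<Rightarrow> bool" where
  "B_c f \<longleftrightarrow> continuous_on {0..} f
     \<and> (\<forall>u\<ge>0. f u > 0)
     \<and> (\<forall>u v. 0 \<le> u \<and> u < v \<longrightarrow> f v < f u)
     \<and> f 0 \<ge> 1
     \<and> (f \<longlongrightarrow> 0) at_top"

definition multi_indices :: "nat \<Rightarrow> nat \<Rightarrow> (nat \<Rightarrow> nat) set" where
  "multi_indices d n = PiE {1..d+1} (\<lambda>_. {1..n})"

text \<open>The d-linear Schur multiplier; matrices are functions nat => nat => real with
  indices in {1..n}; Y k is the k-th matrix. Result: entry (a,b).\<close>
definition schur_mult ::
  "nat \<Rightarrow> nat \<Rightarrow> ((nat \<Rightarrow> nat) \<Rightarrow> real) \<Rightarrow> (nat \<Rightarrow> nat \<Rightarrow> nat \<Rightarrow> real) \<Rightarrow> nat \<Rightarrow> nat \<Rightarrow> real" where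
  "schur_mult d n m Y a b =
     (\<Sum>j\<in>multi_indices d n.
        if j 1 = a \<and> j (d+1) = b then m j * (\<Prod>k\<in>{1..d}. Y k (j k) (j (k+1))) else 0)"

definition mat_trace :: "nat \<Rightarrow> (nat \<Rightarrow> nat \<Rightarrow> real) \<Rightarrow> real" where
  "mat_trace n A = (\<Sum>a\<in>{1..n}. A a a)"

definition array_norm1 :: "nat \<Rightarrow> nat \<Rightarrow> ((nat \<Rightarrow> nat) \<Rightarrow> real) \<Rightarrow> real" where
  "array_norm1 d n m = (\<Sum>j\<in>multi_indices d n. \<bar>m j\<bar>)"

end

theory Submission
  imports Defs
begin

text \<open>The argument is deterministic up to a union bound. If every entry of every X k satisfies
  |X k i j| < s, then each summand of the trace is bounded by |m j| s^d, and strictly so for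
  a nonzero coefficient, whence |Tr| < ||m||_1 s^d. Choosing s with ||m||_1 s^d = t, the event
  |Tr| \<ge> t is covered by the d n^2 events |X k i j| \<ge> s, each of probability at most f s.\<close>

lemma finite_multi_indices: "finite (multi_indices d n)"
  unfolding multi_indices_def by (simp add: finite_PiE)

lemma multi_indices_range:
  "j \<in> multi_indices d n \<Longrightarrow> k \<in> {1..d+1} \<Longrightarrow> j k \<in> {1..n}"
  unfolding multi_indices_def by (auto simp: PiE_def Pi_def)

lemma mat_trace_schur_mult:
  "mat_trace n (schur_mult d n m Y) =
     (\<Sum>j\<in>multi_indices d n.
        if j 1 = j (d+1) then m j * (\<Prod>k\<in>{1..d}. Y k (j k) (j (k+1))) else 0)"
proof -
  let ?g = "\<lambda>j. m j * (\<Prod>k\<in>{1..d}. Y k (j k) (j (k+1)))"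
  have "mat_trace n (schur_mult d n m Y) =
     (\<Sum>j\<in>multi_indices d n. \<Sum>a\<in>{1..n}. if j 1 = a \<and> j (d+1) = a then ?g j else 0)"
    unfolding mat_trace_def schur_mult_def by (rule sum.swap)
  also have "\<dots> = (\<Sum>j\<in>multi_indices d n. if j 1 = j (d+1) then ?g j else 0)"
  proof (rule sum.cong[OF refl])
    fix j assume "j \<in> multi_indices d n"
    then have "j 1 \<in> {1..n}" by (rule multi_indices_range) simp
    then show "(\<Sum>a\<in>{1..n}. if j 1 = a \<and> j (d+1) = a then ?g j else 0)
        = (if j 1 = j (d+1) then ?g j else 0)"
      by (simp add: conj_commute[of "j 1 = _"] sum.delta flip: if_if_eq_conj)
  qed
  finally show ?thesis .
qed

lemma abs_mat_trace_schur_mult_le: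
  "\<bar>mat_trace n (schur_mult d n m Y)\<bar> \<le>
     (\<Sum>j\<in>multi_indices d n. \<bar>m j\<bar> * (\<Prod>k\<in>{1..d}. \<bar>Y k (j k) (j (k+1))\<bar>))"
  unfolding mat_trace_schur_mult
  by (rule order_trans[OF sum_abs sum_mono]) (simp add: abs_mult abs_prod prod_nonneg)

lemma abs_mat_trace_schur_mult_less:
  assumes "d \<ge> 1" and "\<exists>j\<in>multi_indices d n. m j \<noteq> 0"
    and small: "\<And>k i i'. k \<in> {1..d} \<Longrightarrow> i \<in> {1..n} \<Longrightarrow> i' \<in> {1..n} \<Longrightarrow> \<bar>Y k i i'\<bar> < s"
  shows "\<bar>mat_trace n (schur_mult d n m Y)\<bar> < array_norm1 d n m * s ^ d"
proof -
  obtain j0 where j0: "j0 \<in> multi_indices d n" "m j0 \<noteq> 0" using assms(2) by blast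
  have entry_small: "\<bar>Y k (j k) (j (k+1))\<bar> < s" if "j \<in> multi_indices d n" "k \<in> {1..d}" for j k
    using that multi_indices_range[of j d n] by (intro small) auto
  have "0 < s"
    using entry_small[OF j0(1), of 1] \<open>d \<ge> 1\<close> by fastforce
  have prod_less: "(\<Prod>k\<in>{1..d}. \<bar>Y k (j k) (j (k+1))\<bar>) < s ^ d" if "j \<in> multi_indices d n" for j
    using prod_mono_strict[of 1 "{1..d}" "\<lambda>k. \<bar>Y k (j k) (j (k+1))\<bar>" "\<lambda>_. s"]
      entry_small[OF that] \<open>d \<ge> 1\<close> \<open>0 < s\<close> by (auto simp: less_imp_le)
  have "\<bar>mat_trace n (schur_mult d n m Y)\<bar> \<le>
     (\<Sum>j\<in>multi_indices d n. \<bar>m j\<bar> * (\<Prod>k\<in>{1..d}. \<bar>Y k (j k) (j (k+1))\<bar>))"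
    by (rule abs_mat_trace_schur_mult_le)
  also have "\<dots> < (\<Sum>j\<in>multi_indices d n. \<bar>m j\<bar> * s ^ d)"
  proof (rule sum_strict_mono_ex1[OF finite_multi_indices])
    show "\<forall>j\<in>multi_indices d n.
        \<bar>m j\<bar> * (\<Prod>k\<in>{1..d}. \<bar>Y k (j k) (j (k+1))\<bar>) \<le> \<bar>m j\<bar> * s ^ d"
      using prod_less by (simp add: less_imp_le mult_left_mono)
    show "\<exists>j\<in>multi_indices d n.
        \<bar>m j\<bar> * (\<Prod>k\<in>{1..d}. \<bar>Y k (j k) (j (k+1))\<bar>) < \<bar>m j\<bar> * s ^ d"
      using j0 prod_less[OF j0(1)] by (intro bexI[OF _ j0(1)]) simp
  qed
  also have "\<dots> = array_norm1 d n m * s ^ d"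
    unfolding array_norm1_def by (simp add: sum_distrib_right)
  finally show ?thesis .
qed

lemma array_norm1_pos:
  "\<exists>j\<in>multi_indices d n. m j \<noteq> 0 \<Longrightarrow> 0 < array_norm1 d n m"
  unfolding array_norm1_def
  by (metis finite_multi_indices abs_ge_zero zero_less_abs_iff sum_pos2)

lemma mult_root_quotient_power_eq:
  fixes N t :: real
  assumes "0 < N" "0 \<le> t" "d \<ge> 1"
  shows "N * (t powr (1 / real d) / N powr (1 / real d)) ^ d = t"
  using assms by (simp add: power_divide powr_inverse_root)

lemma measure_UN_le_card_mult:
  assumes "finite I" "\<And>x. x \<in> I \<Longrightarrow> A x \<in> sets M" "\<And>x. x \<in> I \<Longrightarrow> measure M (A x) \<le> c"
  shows "measure M (\<Union>x\<in>I. A x) \<le> real (card I) * c"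
proof -
  have "measure M (\<Union>x\<in>I. A x) \<le> (\<Sum>x\<in>I. measure M (A x))"
    using assms(1,2) by (rule measure_UNION_le)
  also have "\<dots> \<le> (\<Sum>x\<in>I. c)"
    using assms(3) by (rule sum_mono)
  finally show ?thesis by simp
qed

theorem theorem5:
  fixes M :: "'a measure" and d n :: nat
    and m :: "(nat \<Rightarrow> nat) \<Rightarrow> real"
    and X :: "nat \<Rightarrow> 'a \<Rightarrow> nat \<Rightarrow> nat \<Rightarrow> real"
    and f :: "real \<Rightarrow> real" and t :: real
  assumes "prob_space M"
    and "d \<ge> 1" and "n \<ge> 1"
    and "\<exists>j\<in>multi_indices d n. m j \<noteq> 0"
    and "\<And>k i j. k \<in> {1..d} \<Longrightarrow> i \<in> {1..n} \<Longrightarrow> j \<in> {1..n} \<Longrightarrow>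
           (\<lambda>\<omega>. X k \<omega> i j) \<in> borel_measurable M"
    and "B_c f"
    and "\<And>u k i j. u \<ge> 0 \<Longrightarrow> k \<in> {1..d} \<Longrightarrow> i \<in> {1..n} \<Longrightarrow> j \<in> {1..n} \<Longrightarrow>
           measure M {\<omega> \<in> space M. \<bar>X k \<omega> i j\<bar> \<ge> u} \<le> f u"
    and "t \<ge> 0"
  shows "measure M {\<omega> \<in> space M.
            \<bar>mat_trace n (schur_mult d n m (\<lambda>k. X k \<omega>))\<bar> \<ge> t}
         \<le> real d * real n ^ 2 *
            f (t powr (1 / real d) / array_norm1 d n m powr (1 / real d))"
proof -
  interpret prob_space M by fact
  define s where "s = t powr (1 / real d) / array_norm1 d n m powr (1 / real d)"
  define I where "I = {1..d} \<times> {1..n} \<times> {1..n}"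
  define A where "A = (\<lambda>(k, i, j). {\<omega> \<in> space M. \<bar>X k \<omega> i j\<bar> \<ge> s})"
  have "0 < array_norm1 d n m" using assms(4) by (rule array_norm1_pos)
  then have "array_norm1 d n m * s ^ d = t" and "0 \<le> s"
    using assms(2,8) by (simp_all add: s_def mult_root_quotient_power_eq)
  have A_sets: "A x \<in> sets M" if "x \<in> I" for x
    using that assms(5) by (auto simp: A_def I_def)
  have "{\<omega> \<in> space M. \<bar>mat_trace n (schur_mult d n m (\<lambda>k. X k \<omega>))\<bar> \<ge> t} \<subseteq> (\<Union>x\<in>I. A x)"
    using abs_mat_trace_schur_mult_less[OF assms(2,4), of "\<lambda>k. X k _" s]
      \<open>array_norm1 d n m * s ^ d = t\<close> by (force simp: A_def I_def not_le)
  then have "measure M {\<omega> \<in> space M. \<bar>mat_trace n (schur_mult d n m (\<lambda>k. X k \<omega>))\<bar> \<ge> t}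
      \<le> measure M (\<Union>x\<in>I. A x)"
    using A_sets by (intro finite_measure_mono) (auto simp: I_def)
  also have "\<dots> \<le> real (card I) * f s"
    using A_sets assms(7)[OF \<open>0 \<le> s\<close>] by (intro measure_UN_le_card_mult) (auto simp: I_def A_def)
  also have "real (card I) = real d * real n ^ 2"
    by (simp add: I_def card_cartesian_product power2_eq_square)
  finally show ?thesis unfolding s_def .
qed

end
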